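(* Let $i,j\in J$ be two jobs with $\varphi_i(0)>\varphi_j(0)$, $w_ip_j\neq w_jp_i$ and $t^*_{ij}\in(0,T)$, and let $S$ be a complete schedule with $t_j\notin[t^*_{ij},t^*_{ij}+p_j)$. (1) If $t_i<t^*_{ij}$ and job $j$ is processed before job $i$ in $S$, then $S$ is not a potential schedule. (2) If $t_i\ge t^*_{ij}+p_j$ and job $i$ is processed before job $j$ in $S$, then $S$ is not a potential schedule.
   Context: $J$ is a finite set of jobs; job $j$ has processing time $p_j>0$ and weight $w_j>0$; $T=\sum_{j\in J}p_j$. A complete schedule is an ordering of $J$ processed consecutively without idle time from time $0$; job $j$ has start time $t_j$. For $t\ge 0$, $\varphi_j(t)=\frac{w_j}{p_j(p_j+t)}$. For jobs $i,j$ with $w_ip_j\neq w_jp_i$, $t^*_{ij}=\frac{w_jp_i^2-w_ip_j^2}{w_ip_j-w_jp_i}$ (the unique real $t$ with $\varphi_i(t)=\varphi_j(t)$). Dominance rule: for an interval $I\subseteq[0,\infty)$, the relation "$i$ dominates $j$ on $I$" is violated by a schedule if $j$ is processed before $i$ and both $t_j\in I$ and $t_i-p_j\in I$. The rule contains, for each pair of distinct jobs $i,j$ with $(p_i,w_i)\ne(p_j,w_j)$: (1) if $\varphi_i(t)\ge\varphi_j(t)$ for all $t\ge 0$, "$i$ dominates $j$ on $[0,\infty)$"; (2) otherwise, if $\varphi_j(t)\ge\varphi_i(t)$ for all $t\ge0$, "$j$ dominates $i$ on $[0,\infty)$"; (3) otherwise, labelling the pair so that $\varphi_i(0)>\varphi_j(0)$,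 $t^*_{ij}>0$ is defined and the rule contains "$i$ dominates $j$ on $[0,t^*_{ij})$" and "$j$ dominates $i$ on $[t^*_{ij},\infty)$". A complete schedule is a potential schedule if it violates no relation of the rule. *)

theory Defs
  imports Complex_Main
begin

definition complete_schedule :: "'a set \<Rightarrow> 'a list \<Rightarrow> bool" where
  "complete_schedule J S \<longleftrightarrow> distinct S \<and> set S = J"

definition start_time :: "('a \<Rightarrow> real) \<Rightarrow> 'a list \<Rightarrow> 'a \<Rightarrow> real" where
  "start_time p S j = sum_list (map p (takeWhile (\<lambda>x. x \<noteq> j) S))"

definition before :: "'a list \<Rightarrow> 'a \<Rightarrow> 'a \<Rightarrow> bool" where
  "before S a b \<longleftrightarrow> (\<exists>k l. k < l \<and> l < length S \<and> S ! k = a \<and> S ! l = b)"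

definition phi :: "('a \<Rightarrow> real) \<Rightarrow> ('a \<Rightarrow> real) \<Rightarrow> 'a \<Rightarrow> real \<Rightarrow> real" where
  "phi p w j t = w j / (p j * (p j + t))"

definition tstar :: "('a \<Rightarrow> real) \<Rightarrow> ('a \<Rightarrow> real) \<Rightarrow> 'a \<Rightarrow> 'a \<Rightarrow> real" where
  "tstar p w i j = (w j * (p i)\<^sup>2 - w i * (p j)\<^sup>2) / (w i * p j - w j * p i)"

text \<open>The dominance rule: a set of triples (a, b, I) meaning "a dominates b on I".
  The clauses are instantiated for both labellings (i,j) of each unordered pair.\<close>
definition dominance_rule :: "('a \<Rightarrow> real) \<Rightarrow> ('a \<Rightarrow> real) \<Rightarrow> 'a set \<Rightarrow> ('a \<times> 'a \<times> real set) set" where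
  "dominance_rule p w J = {(a, b, I). \<exists>i j. i \<in> J \<and> j \<in> J \<and> i \<noteq> j \<and> (p i, w i) \<noteq> (p j, w j) \<and>
     (let c1 = (\<forall>t\<ge>0. phi p w i t \<ge> phi p w j t);
          c2 = (\<forall>t\<ge>0. phi p w j t \<ge> phi p w i t)
      in (c1 \<and> (a, b, I) = (i, j, {0..}))
       \<or> (\<not> c1 \<and> c2 \<and> (a, b, I) = (j, i, {0..}))
       \<or> (\<not> c1 \<and> \<not> c2 \<and> phi p w i 0 > phi p w j 0 \<and>
            ((a, b, I) = (i, j, {0..<tstar p w i j}) \<or> (a, b, I) = (j, i, {tstar p w i j..}))))}"

definition violates :: "('a \<Rightarrow> real) \<Rightarrow> 'a list \<Rightarrow> 'a \<Rightarrow> 'a \<Rightarrow> real set \<Rightarrow> bool" where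
  "violates p S a b I \<longleftrightarrow> before S b a \<and> start_time p S b \<in> I \<and> start_time p S a - p b \<in> I"

definition potential_schedule :: "('a \<Rightarrow> real) \<Rightarrow> ('a \<Rightarrow> real) \<Rightarrow> 'a set \<Rightarrow> 'a list \<Rightarrow> bool" where
  "potential_schedule p w J S \<longleftrightarrow> complete_schedule J S \<and>
     (\<forall>(a, b, I) \<in> dominance_rule p w J. \<not> violates p S a b I)"

end

theory Submission
  imports Defs
begin

text \<open>Write \<open>B = w i p j - w j p i\<close>. Clearing denominators, \<open>\<phi>\<^sub>i(t) - \<phi>\<^sub>j(t)\<close> has the sign of
  \<open>B (t - t\<^sup>*)\<close>; since \<open>\<phi>\<^sub>i(0) > \<phi>\<^sub>j(0)\<close> and \<open>t\<^sup>* > 0\<close>, \<open>B < 0\<close>, so neither curve dominates the other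
  and the rule contains "\<open>i\<close> dominates \<open>j\<close> on \<open>[0, t\<^sup>*)\<close>" and "\<open>j\<close> dominates \<open>i\<close> on \<open>[t\<^sup>*, \<infinity>)\<close>".
  In case (1), \<open>j\<close> precedes \<open>i\<close> and \<open>0 \<le> t\<^sub>j \<le> t\<^sub>i - p\<^sub>j < t\<^sup>*\<close>, violating the first relation.
  In case (2), \<open>i\<close> precedes \<open>j\<close> and \<open>t\<^sup>* \<le> t\<^sub>i \<le> t\<^sub>j - p\<^sub>i\<close>, violating the second.\<close>

lemma takeWhile_neq_nth_distinct:
  assumes "distinct S" and "k < length S"
  shows "takeWhile (\<lambda>x. x \<noteq> S ! k) S = take k S"
  by (rule takeWhile_eq_take_P_nth) (use assms in \<open>auto simp: nth_eq_iff_index_eq\<close>)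

lemma start_time_nonneg:
  assumes "\<And>x. x \<in> set S \<Longrightarrow> p x > (0::real)"
  shows "0 \<le> start_time p S a"
  unfolding start_time_def
  by (rule sum_list_nonneg) (auto dest: set_takeWhileD assms intro: less_imp_le)

lemma start_time_before:
  assumes "distinct S" and pos: "\<And>x. x \<in> set S \<Longrightarrow> p x > (0::real)" and "before S a b"
  shows "start_time p S a + p a \<le> start_time p S b"
proof -
  obtain k l where kl: "k < l" "l < length S" "S ! k = a" "S ! l = b"
    using \<open>before S a b\<close> unfolding before_def by blast
  have "take l S = take k S @ [a] @ take (l - Suc k) (drop (Suc k) S)"
    using kl take_add[of "Suc k" "l - Suc k" S] by (simp add: take_Suc_conv_app_nth)
  moreover have "0 \<le> sum_list (map p (take (l - Suc k) (drop (Suc k) S)))"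
    by (rule sum_list_nonneg) (auto dest: in_set_takeD in_set_dropD pos intro: less_imp_le)
  moreover have "start_time p S a = sum_list (map p (take k S))"
    and "start_time p S b = sum_list (map p (take l S))"
    using takeWhile_neq_nth_distinct[OF \<open>distinct S\<close>, of k]
      takeWhile_neq_nth_distinct[OF \<open>distinct S\<close>, of l] kl
    by (simp_all add: start_time_def)
  ultimately show ?thesis
    by simp
qed

lemma phi_diff_eq:
  assumes "p a > 0" and "p b > 0" and "t \<ge> 0" and "w a * p b \<noteq> w b * p a"
  shows "phi p w a t - phi p w b t
    = (w a * p b - w b * p a) * (t - tstar p w a b) / (p a * (p a + t) * (p b * (p b + t)))"
proof -
  define B where "B = w a * p b - w b * p a"
  have denoms: "p a * (p a + t) \<noteq> 0" "p b * (p b + t) \<noteq> 0"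
    using assms by auto
  have "B \<noteq> 0"
    using assms(4) by (simp add: B_def)
  then have "w a * (p b * (p b + t)) - w b * (p a * (p a + t)) = B * (t - tstar p w a b)"
    unfolding B_def tstar_def by (simp add: field_simps power2_eq_square)
  then show ?thesis
    unfolding phi_def diff_frac_eq[OF denoms] by (simp add: B_def)
qed

lemma phi_less_after_tstar:
  assumes "p a > 0" and "p b > 0" and "w a * p b \<noteq> w b * p a"
    and "phi p w a 0 > phi p w b 0" and "tstar p w a b > 0" and "t > tstar p w a b"
  shows "phi p w a t < phi p w b t"
proof -
  define B where "B = w a * p b - w b * p a"
  have pos_denom: "0 < p a * (p a + s) * (p b * (p b + s))" if "s \<ge> 0" for s
    using assms(1,2) that by simp
  have "0 < B * (0 - tstar p w a b) / (p a * (p a + 0) * (p b * (p b + 0)))"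
    using phi_diff_eq[OF assms(1-2) order_refl assms(3)] assms(4) by (simp add: B_def)
  then have "B * tstar p w a b < 0"
    using pos_denom[of 0] by (simp add: divide_less_0_iff)
  then have "B < 0"
    using assms(5) by (simp add: mult_less_0_iff)
  then have "B * (t - tstar p w a b) / (p a * (p a + t) * (p b * (p b + t))) < 0"
    using pos_denom[of t] assms(5,6) by (simp add: divide_neg_pos mult_neg_pos)
  then show ?thesis
    using phi_diff_eq[of p a b t w] assms by (simp add: B_def)
qed

lemma dominance_rule_crossing_pair:
  assumes "i \<in> J" and "j \<in> J" and "phi p w i 0 > phi p w j 0"
    and "\<not> (\<forall>t\<ge>0. phi p w i t \<ge> phi p w j t)"
  shows "(i, j, {0..<tstar p w i j}) \<in> dominance_rule p w J"
    and "(j, i, {tstar p w i j..}) \<in> dominance_rule p w J"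
proof -
  have "i \<noteq> j" and "(p i, w i) \<noteq> (p j, w j)"
    using assms(3) unfolding phi_def by auto
  moreover have "\<not> (\<forall>t\<ge>0. phi p w j t \<ge> phi p w i t)"
    using assms(3) by force
  ultimately show "(i, j, {0..<tstar p w i j}) \<in> dominance_rule p w J"
    and "(j, i, {tstar p w i j..}) \<in> dominance_rule p w J"
    unfolding dominance_rule_def using assms by (simp_all add: Let_def) blast+
qed

lemma violates_not_potential_schedule:
  assumes "(a, b, I) \<in> dominance_rule p w J" and "violates p S a b I"
  shows "\<not> potential_schedule p w J S"
  using assms unfolding potential_schedule_def by fast

theorem lemma3:
  fixes J :: "'a set" and p w :: "'a \<Rightarrow> real" and S :: "'a list" and i j :: 'a
  assumes "finite J"
    and "\<And>k. k \<in> J \<Longrightarrow> p k > 0"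
    and "\<And>k. k \<in> J \<Longrightarrow> w k > 0"
    and "i \<in> J" and "j \<in> J"
    and "phi p w i 0 > phi p w j 0"
    and "w i * p j \<noteq> w j * p i"
    and "0 < tstar p w i j" and "tstar p w i j < (\<Sum>k\<in>J. p k)"
    and "complete_schedule J S"
    and "start_time p S j \<notin> {tstar p w i j ..< tstar p w i j + p j}"
  shows "(start_time p S i < tstar p w i j \<and> before S j i \<longrightarrow> \<not> potential_schedule p w J S)
       \<and> (start_time p S i \<ge> tstar p w i j + p j \<and> before S i j \<longrightarrow> \<not> potential_schedule p w J S)"
proof -
  have "distinct S" and pos: "\<And>x. x \<in> set S \<Longrightarrow> p x > 0"
    using assms(2,10) unfolding complete_schedule_def by auto
  have "p i > 0" and "p j > 0"
    using assms(2,4,5) by auto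
  have "tstar p w i j + 1 \<ge> 0"
    using assms(8) by simp
  moreover have "phi p w i (tstar p w i j + 1) < phi p w j (tstar p w i j + 1)"
    by (rule phi_less_after_tstar) (use assms in auto)
  ultimately have "\<not> (\<forall>t\<ge>0. phi p w i t \<ge> phi p w j t)"
    by (meson not_le)
  note rules = dominance_rule_crossing_pair[OF assms(4-6) this]
  have "violates p S i j {0..<tstar p w i j}"
    if "start_time p S i < tstar p w i j" and "before S j i"
    using that start_time_before[of S p j i] start_time_nonneg[of S p j] \<open>distinct S\<close> pos \<open>p j > 0\<close>
    unfolding violates_def by auto
  moreover have "violates p S j i {tstar p w i j..}"
    if "start_time p S i \<ge> tstar p w i j + p j" and "before S i j"
    using that start_time_before[of S p i j] \<open>distinct S\<close> pos \<open>p i > 0\<close> \<open>p j > 0\<close>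
    unfolding violates_def by auto
  ultimately show ?thesis
    using violates_not_potential_schedule[OF rules(1)] violates_not_potential_schedule[OF rules(2)]
    by blast
qed

end
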